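(* The scheme-theoretic image of the morphism $\pi:\mathscr E\to\mathscr L$ coincides with the variety of X-states $\mathscr X$.
   Context: Let $V_1,\dots,V_n$ be two-dimensional complex vector spaces, $\mathscr V_i=\mathfrak{sl}(V_i)$ with form $\langle A,B\rangle=\tfrac12\operatorname{tr}(AB)$, $\mathscr L$ the affine space of trace-one endomorphisms of $V_1\otimes\cdots\otimes V_n$, identified (Bloch model) with $\bigoplus_{\emptyset\ne I\subseteq\{1,\dots,n\}}\mathscr V_I$, $\mathscr V_I=\bigotimes_{i\in I}\mathscr V_i$, via $\rho=2^{-n}\mathrm{id}+\sum_I\rho_I$ (with $\mathscr V_I$ embedded in $\mathrm{End}(V_1\otimes\cdots\otimes V_n)$ by tensoring with identities). An X-state is a $\rho\in\mathscr L$ which for some ordered bases $\{e^i_0,e^i_1\}$ of the $V_i$ preserves the span of basis tensors $e^1_{\phi(1)}\otimes\cdots\otimes e^n_{\phi(n)}$ with $\sum\phi(i)$ even and the span of those with $\sum\phi(i)$ odd; $\mathscr X$ is the Zariski closure in $\mathscr L$ of the set of X-states with reduced structure. Let $\breve{\mathbb P}(\mathscr V_i)\subseteq\mathbb P(\mathscr V_i)$ be the open set of lines spanned by $v$ with $\langle v,v\rangle\neq0$, and $\breve P=\prod_i\breve{\mathbb P}(\mathscr V_i)$. For $\mathfrak B=(\mathscr V_1^\ell,\dots,\mathscr V_n^\ell)\in\breve P$ let $\mathscr V_i^t=(\mathscr V_i^\ell)^\perp$, let $\mathscr V_I^e$ be spanned by tensors $\bigotimes_{i\in I}x_i$ with each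 $x_i\in\mathscr V_i^\ell$ or $x_i\in\mathscr V_i^t$ and an even number transversal, and $X(\mathfrak B)=\bigoplus_{\emptyset\ne I}\mathscr V_I^e$. Let $\mathscr E\to\breve P$ be the vector bundle (a subbundle of the trivial bundle $\breve P\times\mathscr L$, namely the direct sum over pairs of disjoint $I,J$ with $I\cup J\ne\emptyset$, $|J|$ even, of the bundles with fibers $\bigotimes_{i\in I}\mathscr V_i^\ell\otimes\bigotimes_{j\in J}\mathscr V_j^t$) whose fiber over $\mathfrak B$ is $X(\mathfrak B)$, and $\pi:\mathscr E\to\mathscr L$ the morphism restricting on each fiber to the inclusion $X(\mathfrak B)\subseteq\mathscr L$. *)

theory Defs
  imports Complex_Main
begin

text \<open>V_i = C^2 with coordinates indexed by bool (False = 0, True = 1).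
  2x2 matrices are functions bool => bool => complex (row, column).
  V_1 (x) ... (x) V_n = C^(2^n); the basis index k < 2^n corresponds to the
  multi-index phi with phi(i) = bit k i (factor i is bit i).
  Vectors of C^(2^n) are nat => complex, endomorphisms are nat => nat => complex,
  with all entries outside the index range {0..<2^n} equal to zero.\<close>

type_synonym cvec = "nat \<Rightarrow> complex"
type_synonym cmat = "nat \<Rightarrow> nat \<Rightarrow> complex"
type_synonym mat2 = "bool \<Rightarrow> bool \<Rightarrow> complex"

definition mulv :: "nat \<Rightarrow> cmat \<Rightarrow> cvec \<Rightarrow> cvec" where
  "mulv N A v = (\<lambda>r. if r < N then (\<Sum>k<N. A r k * v k) else 0)"

definition ctrace :: "nat \<Rightarrow> cmat \<Rightarrow> complex" where
  "ctrace N M = (\<Sum>k<N. M k k)"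

definition in_range :: "nat \<Rightarrow> cmat \<Rightarrow> bool" where
  "in_range N M \<longleftrightarrow> (\<forall>r c. (N \<le> r \<or> N \<le> c) \<longrightarrow> M r c = 0)"

definition idm :: "nat \<Rightarrow> cmat" where
  "idm N = (\<lambda>r c. if r < N \<and> c = r then 1 else 0)"

definition Lspace :: "nat \<Rightarrow> cmat set" where
  "Lspace n = {\<rho>. in_range (2^n) \<rho> \<and> ctrace (2^n) \<rho> = 1}"

definition cspan_v :: "cvec set \<Rightarrow> cvec set" where
  "cspan_v S = {w. \<exists>F c. finite F \<and> F \<subseteq> S \<and> w = (\<lambda>r. \<Sum>g\<in>F. c g * g r)}"

definition cspan_m :: "cmat set \<Rightarrow> cmat set" where
  "cspan_m S = {M. \<exists>F c. finite F \<and> F \<subseteq> S \<and> M = (\<lambda>r k. \<Sum>g\<in>F. c g * g r k)}"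

text \<open>An ordered basis of C^2: e False = e_0, e True = e_1 (each a vector indexed by bool),
  linearly independent (hence a basis of the 2-dimensional space).\<close>
definition basis2 :: "mat2 \<Rightarrow> bool" where
  "basis2 e \<longleftrightarrow> (\<forall>a b. (\<forall>x. a * e False x + b * e True x = 0) \<longrightarrow> a = 0 \<and> b = 0)"

text \<open>Basis tensor e^1_{phi(1)} (x) ... (x) e^n_{phi(n)}, phi(i) = bit j i.\<close>
definition btensor :: "nat \<Rightarrow> (nat \<Rightarrow> mat2) \<Rightarrow> nat \<Rightarrow> cvec" where
  "btensor n e j = (\<lambda>k. if k < 2^n then (\<Prod>i<n. e i (bit j i) (bit k i)) else 0)"

definition par :: "nat \<Rightarrow> nat \<Rightarrow> bool" where
  "par n j = even (card {i. i < n \<and> bit j i})"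

definition Xstate :: "nat \<Rightarrow> cmat \<Rightarrow> bool" where
  "Xstate n \<rho> \<longleftrightarrow> \<rho> \<in> Lspace n \<and>
     (\<exists>e. (\<forall>i<n. basis2 (e i)) \<and>
        (\<forall>p. \<forall>w \<in> cspan_v {btensor n e j | j. j < 2^n \<and> par n j = p}.
             mulv (2^n) \<rho> w \<in> cspan_v {btensor n e j | j. j < 2^n \<and> par n j = p}))"

definition tr2 :: "mat2 \<Rightarrow> complex" where
  "tr2 A = A False False + A True True"

definition sl2 :: "mat2 set" where
  "sl2 = {A. tr2 A = 0}"

definition form2 :: "mat2 \<Rightarrow> mat2 \<Rightarrow> complex" where
  "form2 A B = (\<Sum>a\<in>UNIV. \<Sum>b\<in>UNIV. A a b * B b a) / 2"

text \<open>A point B of breve P is given by spanning vectors v i of the lines V_i^l,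
  with v i in sl(V_i) and <v i, v i> \<noteq> 0.\<close>
definition frame :: "nat \<Rightarrow> (nat \<Rightarrow> mat2) \<Rightarrow> bool" where
  "frame n v \<longleftrightarrow> (\<forall>i<n. v i \<in> sl2 \<and> form2 (v i) (v i) \<noteq> 0)"

definition Vl :: "mat2 \<Rightarrow> mat2 set" where
  "Vl v = {(\<lambda>a b. c * v a b) | c. True}"

definition Vt :: "mat2 \<Rightarrow> mat2 set" where
  "Vt v = {x \<in> sl2. form2 x (v) = 0}"

text \<open>Embedding of a tensor (x) x_i (i in I) into End(C^(2^n)) by tensoring
  with identities on the factors outside I.\<close>
definition embed :: "nat \<Rightarrow> nat set \<Rightarrow> (nat \<Rightarrow> mat2) \<Rightarrow> cmat" where
  "embed n I x = (\<lambda>r c. if r < 2^n \<and> c < 2^n then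
      (\<Prod>i<n. if i \<in> I then x i (bit r i) (bit c i)
               else (if bit r i = bit c i then 1 else 0)) else 0)"

text \<open>X(B) = direct sum over nonempty I of V_I^e, as a subspace of End.\<close>
definition XB :: "nat \<Rightarrow> (nat \<Rightarrow> mat2) \<Rightarrow> cmat set" where
  "XB n v = cspan_m {embed n I x | I x. I \<subseteq> {..<n} \<and> I \<noteq> {} \<and>
      (\<exists>\<tau>. even (card {i\<in>I. \<tau> i}) \<and>
           (\<forall>i\<in>I. x i \<in> (if \<tau> i then Vt (v i) else Vl (v i))))}"

text \<open>Bloch identification: rho = 2^-n id + sum_I rho_I.\<close>
definition bloch :: "nat \<Rightarrow> cmat \<Rightarrow> cmat" where
  "bloch n x = (\<lambda>r c. idm (2^n) r c / 2^n + x r c)"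

text \<open>Set-theoretic image of pi : E -> L.\<close>
definition pi_image :: "nat \<Rightarrow> cmat set" where
  "pi_image n = {bloch n x | v x. frame n v \<and> x \<in> XB n v}"

inductive_set polyfun :: "nat \<Rightarrow> (cmat \<Rightarrow> complex) set" for N :: nat where
  const: "(\<lambda>M. a) \<in> polyfun N"
| coord: "r < N \<Longrightarrow> c < N \<Longrightarrow> (\<lambda>M. M r c) \<in> polyfun N"
| add: "p \<in> polyfun N \<Longrightarrow> q \<in> polyfun N \<Longrightarrow> (\<lambda>M. p M + q M) \<in> polyfun N"
| mult: "p \<in> polyfun N \<Longrightarrow> q \<in> polyfun N \<Longrightarrow> (\<lambda>M. p M * q M) \<in> polyfun N"

definition vanishing_ideal :: "nat \<Rightarrow> cmat set \<Rightarrow> (cmat \<Rightarrow> complex) set" where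
  "vanishing_ideal N S = {p \<in> polyfun N. \<forall>M\<in>S. p M = 0}"

end

(* The two sets coincide, so their vanishing ideals agree.

   A vector v of sl(V) with <v,v> != 0 has the two eigenvalues +mu and -mu, where mu^2 = <v,v>, so
   it is a multiple of the operator s_e that acts by +1 on e_0 and by -1 on e_1 for an eigenbasis e.
   Multiples of v act diagonally in this basis, while a traceless y with <y,v> = 0 has vanishing
   diagonal and hence swaps the lines of e_0 and e_1. A generator of X(B) has an even number of
   transversal factors, so it maps each basis tensor to a multiple of a basis tensor of the same
   parity: every point of the image of pi is an X-state.

   Conversely, let rho preserve the even and the odd span for bases e^i, with dual bases f^i.
   Then rho = sum_phi rho(e_phi) f_phi^T, and rho(e_phi) is a combination of the e_psi of the
   parity of phi. For psi and phi of equal parity, e_psi f_phi^T is the tensor product of matrix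
   units E_ab = e_a f_b^T, where E_aa = (1 +- s_e)/2 and E_ab for a != b is transversal to s_e.
   Multiplying out puts rho in the span of the identity and of X(B) for the frame (s_e1, ..., s_en),
   and trace one forces the coefficient of the identity to be 2^-n. *)

theory Submission
  imports Defs "HOL-Library.Function_Algebras" "HOL-Library.FuncSet"
begin

section \<open>Two-by-two matrices and adapted bases\<close>

definition id2 :: mat2 where
  "id2 = (\<lambda>a b. if a = b then 1 else 0)"

definition dot2 :: "(bool \<Rightarrow> complex) \<Rightarrow> (bool \<Rightarrow> complex) \<Rightarrow> complex" where
  "dot2 u w = u False * w False + u True * w True"

definition mulv2 :: "mat2 \<Rightarrow> (bool \<Rightarrow> complex) \<Rightarrow> bool \<Rightarrow> complex" where
  "mulv2 y w = (\<lambda>b. dot2 (y b) w)"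

definition det2 :: "mat2 \<Rightarrow> complex" where
  "det2 e = e False False * e True True - e False True * e True False"

text \<open>A basis is stored row-wise: \<open>e a\<close> is the basis vector \<open>e\<^sub>a\<close>. The rows of
  \<open>dual2 e\<close> form the dual basis; \<open>dual2_scaled e k\<close> is the adjugate scaled by \<open>k\<close>.\<close>

definition dual2_scaled :: "mat2 \<Rightarrow> complex \<Rightarrow> mat2" where
  "dual2_scaled e k = (\<lambda>a c. k * (if a then (if c then e False False else - e False True)
                                       else (if c then - e True False else e True True)))"

definition dual2 :: "mat2 \<Rightarrow> mat2" where
  "dual2 e = dual2_scaled e (inverse (det2 e))"

text \<open>Turns an identity about \<open>dual2 e\<close> into a polynomial identity, which \<open>algebra\<close> decides.\<close>
lemma dual2_adjugate_cases:
  assumes "det2 e \<noteq> 0" and "\<And>k. k * det2 e = 1 \<Longrightarrow> P (dual2_scaled e k)"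
  shows "P (dual2 e)"
  using assms unfolding dual2_def by simp

lemma basis2_iff_det2: "basis2 e \<longleftrightarrow> det2 e \<noteq> 0"
proof
  assume "basis2 e"
  then have indep: "\<And>a b. (\<And>x. a * e False x + b * e True x = 0) \<Longrightarrow> a = 0 \<and> b = 0"
    unfolding basis2_def by blast
  show "det2 e \<noteq> 0"
  proof
    assume det: "det2 e = 0"
    have "e True c = 0 \<and> - e False c = 0" for c
    proof (rule indep)
      show "e True c * e False x + - e False c * e True x = 0" for x
        using det by (cases c; cases x) (simp_all add: det2_def algebra_simps)
    qed
    then have "(0::complex) = 0 \<and> (1::complex) = 0"
      by (intro indep) simp
    then show False
      by simp
  qed
next
  assume det: "det2 e \<noteq> 0"
  show "basis2 e" unfolding basis2_def
  proof (intro allI impI)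
    fix a b assume "\<forall>x. a * e False x + b * e True x = 0"
    then have comb: "a * e False False + b * e True False = 0"
      "a * e False True + b * e True True = 0"
      by simp_all
    have "a * det2 e = (a * e False False + b * e True False) * e True True
                     - (a * e False True + b * e True True) * e True False"
      by (simp add: det2_def algebra_simps)
    then have "a * det2 e = 0"
      by (simp only: comb) simp
    have "b * det2 e = (a * e False True + b * e True True) * e False False
                     - (a * e False False + b * e True False) * e False True"
      by (simp add: det2_def algebra_simps)
    then have "b * det2 e = 0"
      by (simp only: comb) simp
    then show "a = 0 \<and> b = 0"
      using \<open>a * det2 e = 0\<close> det by simp
  qed
qed

lemma dual2_complete:
  "det2 e \<noteq> 0 \<Longrightarrow> e False r * dual2 e False c + e True r * dual2 e True c = id2 r c"
  by (erule dual2_adjugate_cases, cases r; cases c)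
    (simp add: id2_def dual2_scaled_def det2_def; algebra)+

lemma expand_vec_in_basis2:
  assumes "det2 e \<noteq> 0"
  shows "w = (\<lambda>c. dot2 (dual2 e False) w * e False c + dot2 (dual2 e True) w * e True c)"
proof
  fix c
  have "dot2 (dual2 e False) w * e False c + dot2 (dual2 e True) w * e True c
      = w False * (e False c * dual2 e False False + e True c * dual2 e True False)
      + w True * (e False c * dual2 e False True + e True c * dual2 e True True)"
    by (simp add: dot2_def algebra_simps)
  then show "w c = dot2 (dual2 e False) w * e False c + dot2 (dual2 e True) w * e True c"
    using dual2_complete[OF assms, of c] by (cases c) (simp_all add: id2_def)
qed

definition sign_op :: "mat2 \<Rightarrow> mat2" where
  "sign_op e = (\<lambda>r c. e False r * dual2 e False c - e True r * dual2 e True c)"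

definition matunit2 :: "mat2 \<Rightarrow> bool \<Rightarrow> bool \<Rightarrow> mat2" where
  "matunit2 e a b = (\<lambda>r c. e a r * dual2 e b c)"

definition coord2 :: "mat2 \<Rightarrow> mat2 \<Rightarrow> bool \<Rightarrow> bool \<Rightarrow> complex" where
  "coord2 e y b a = dot2 (dual2 e b) (mulv2 y (e a))"

lemma expand_mat_in_basis2:
  "det2 e \<noteq> 0 \<Longrightarrow> y r c = mulv2 y (e False) r * dual2 e False c + mulv2 y (e True) r * dual2 e True c"
  by (erule dual2_adjugate_cases, cases r; cases c)
    (simp add: mulv2_def dot2_def dual2_scaled_def det2_def; algebra)+

lemma sign_op_sl2: "det2 e \<noteq> 0 \<Longrightarrow> sign_op e \<in> sl2"
  unfolding sign_op_def
  by (erule dual2_adjugate_cases) (simp add: sl2_def tr2_def dual2_scaled_def det2_def; algebra)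

lemma form2_sign_op: "det2 e \<noteq> 0 \<Longrightarrow> form2 (sign_op e) (sign_op e) = 1"
  unfolding sign_op_def
  by (erule dual2_adjugate_cases) (simp add: form2_def UNIV_bool dual2_scaled_def det2_def; algebra)

lemma mulv2_sign_op:
  "det2 e \<noteq> 0 \<Longrightarrow> mulv2 (sign_op e) (e a) = (\<lambda>b. (if a then -1 else 1) * e a b)"
  unfolding sign_op_def
  by (erule dual2_adjugate_cases, cases a)
    (simp add: fun_eq_iff all_bool_eq mulv2_def dot2_def dual2_scaled_def det2_def; algebra)+

lemma matunit2_diag:
  "det2 e \<noteq> 0 \<Longrightarrow> matunit2 e a a = (\<lambda>r c. (id2 r c + (if a then -1 else 1) * sign_op e r c) / 2)"
  unfolding matunit2_def sign_op_def
  by (erule dual2_adjugate_cases, cases a)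
    (simp add: fun_eq_iff all_bool_eq id2_def dual2_scaled_def det2_def; algebra)+

lemma matunit2_offdiag_Vt: "a \<noteq> b \<Longrightarrow> matunit2 e a b \<in> Vt (sign_op e)"
  by (cases a; cases b)
    (simp_all add: matunit2_def sign_op_def dual2_def dual2_scaled_def Vt_def sl2_def tr2_def
      form2_def UNIV_bool algebra_simps)

lemma Vl_subset_sl2: "v \<in> sl2 \<Longrightarrow> Vl v \<subseteq> sl2"
  by (auto simp: Vl_def sl2_def tr2_def distrib_left[symmetric])

lemma Vt_subset_sl2: "Vt v \<subseteq> sl2"
  by (auto simp: Vt_def)

lemma trace_coord2:
  assumes det: "det2 e \<noteq> 0"
  shows "tr2 y = coord2 e y False False + coord2 e y True True"
proof -
  have "coord2 e y False False + coord2 e y True True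
      = (\<Sum>c\<in>UNIV. \<Sum>d\<in>UNIV. y c d * (e False d * dual2 e False c + e True d * dual2 e True c))"
    by (simp add: coord2_def mulv2_def dot2_def UNIV_bool algebra_simps)
  also have "\<dots> = tr2 y"
    by (simp add: dual2_complete[OF det] UNIV_bool id2_def tr2_def)
  finally show ?thesis ..
qed

lemma form2_sign_op_coord2:
  "2 * form2 y (sign_op e) = coord2 e y False False - coord2 e y True True"
  by (simp add: coord2_def mulv2_def dot2_def form2_def UNIV_bool sign_op_def field_simps)

definition flips_basis2 :: "mat2 \<Rightarrow> mat2 \<Rightarrow> bool \<Rightarrow> bool" where
  "flips_basis2 y e f \<longleftrightarrow> (\<forall>a. \<exists>\<kappa>. mulv2 y (e a) = (\<lambda>b. \<kappa> * e (a \<noteq> f) b))"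

lemma flips_basis2_id2: "flips_basis2 id2 e False"
  unfolding flips_basis2_def
  by (intro allI exI[of _ 1]) (simp add: fun_eq_iff mulv2_def dot2_def id2_def)

lemma flips_basis2_Vt_sign_op:
  assumes det: "det2 e \<noteq> 0" and y: "y \<in> Vt (sign_op e)"
  shows "flips_basis2 y e True"
  unfolding flips_basis2_def
proof
  fix a
  have "tr2 y = 0" "form2 y (sign_op e) = 0"
    using y by (auto simp: Vt_def sl2_def)
  then have diag0: "coord2 e y False False = 0" "coord2 e y True True = 0"
    using trace_coord2[OF det, of y] form2_sign_op_coord2[of y e] by auto
  have "mulv2 y (e a) = (\<lambda>c. coord2 e y False a * e False c + coord2 e y True a * e True c)"
    unfolding coord2_def by (rule expand_vec_in_basis2[OF det])
  also have "\<dots> = (\<lambda>c. coord2 e y (\<not> a) a * e (\<not> a) c)"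
    using diag0 by (cases a) simp_all
  finally show "\<exists>\<kappa>. mulv2 y (e a) = (\<lambda>b. \<kappa> * e (a \<noteq> True) b)"
    by auto
qed

lemma singular2_kernel:
  assumes "det2 M = 0"
  shows "\<exists>w. (w False \<noteq> 0 \<or> w True \<noteq> 0) \<and> mulv2 M w = (\<lambda>_. 0)"
proof -
  consider (row0) "M False False \<noteq> 0 \<or> M False True \<noteq> 0"
    | (row1) "M True False \<noteq> 0 \<or> M True True \<noteq> 0"
    | (zero) "\<forall>a b. M a b = 0"
    by (metis (full_types))
  then show ?thesis
  proof cases
    case row0
    let ?w = "\<lambda>b. if b then - M False False else M False True"
    show ?thesis
      using row0 assms
      by (intro exI[of _ ?w]) (auto simp: fun_eq_iff all_bool_eq mulv2_def dot2_def det2_def algebra_simps)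
  next
    case row1
    let ?w = "\<lambda>b. if b then - M True False else M True True"
    show ?thesis
      using row1 assms
      by (intro exI[of _ ?w]) (auto simp: fun_eq_iff all_bool_eq mulv2_def dot2_def det2_def algebra_simps)
  next
    case zero
    show ?thesis
      using zero
      by (intro exI[of _ "\<lambda>b. if b then 0 else 1"]) (simp add: fun_eq_iff mulv2_def dot2_def)
  qed
qed

lemma mulv2_lincomb:
  "mulv2 y (\<lambda>x. \<alpha> * u x + \<beta> * w x) = (\<lambda>b. \<alpha> * mulv2 y u b + \<beta> * mulv2 y w b)"
  by (simp add: fun_eq_iff mulv2_def dot2_def algebra_simps)

lemma sl2_eigenvector:
  assumes v: "v \<in> sl2" and \<mu>: "\<mu> * \<mu> = form2 v v"
  shows "\<exists>w. (w False \<noteq> 0 \<or> w True \<noteq> 0) \<and> mulv2 v w = (\<lambda>b. \<mu> * w b)"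
proof -
  have vTT: "v True True = - v False False"
    using v by (simp add: sl2_def tr2_def add_eq_0_iff)
  have "form2 v v = v False False * v False False + v False True * v True False"
    using vTT by (simp add: form2_def UNIV_bool field_simps)
  define M where "M = (\<lambda>r c. v r c - \<mu> * id2 r c)"
  have "det2 M = 0"
    using \<mu> vTT \<open>form2 v v = _\<close> by (simp add: M_def det2_def id2_def algebra_simps)
  then obtain w where w: "w False \<noteq> 0 \<or> w True \<noteq> 0" "mulv2 M w = (\<lambda>_. 0)"
    using singular2_kernel by blast
  have "mulv2 v w = (\<lambda>b. \<mu> * w b)"
  proof
    fix b
    have "mulv2 M w b = 0"
      using w(2) by simp
    then show "mulv2 v w b = \<mu> * w b"
      by (cases b) (simp_all add: M_def mulv2_def dot2_def id2_def algebra_simps)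
  qed
  then show ?thesis
    using w(1) by blast
qed

lemma sl2_eigenbasis:
  assumes v: "v \<in> sl2" and q: "form2 v v \<noteq> 0"
  shows "\<exists>e \<mu>. det2 e \<noteq> 0 \<and> \<mu> \<noteq> 0 \<and> v = (\<lambda>r c. \<mu> * sign_op e r c)"
proof -
  define \<mu> where "\<mu> = csqrt (form2 v v)"
  have \<mu>2: "\<mu> * \<mu> = form2 v v" and \<mu>0: "\<mu> \<noteq> 0"
    using q by (simp_all add: \<mu>_def power2_eq_square[symmetric])
  obtain w0 where w0: "w0 False \<noteq> 0 \<or> w0 True \<noteq> 0" "mulv2 v w0 = (\<lambda>b. \<mu> * w0 b)"
    using sl2_eigenvector[OF v \<mu>2] by blast
  obtain w1 where w1: "w1 False \<noteq> 0 \<or> w1 True \<noteq> 0" "mulv2 v w1 = (\<lambda>b. - \<mu> * w1 b)"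
    using sl2_eigenvector[OF v, of "- \<mu>"] \<mu>2 by auto
  define e where "e = (\<lambda>a. if a then w1 else w0)"
  have eig: "mulv2 v (e a) = (\<lambda>b. \<mu> * ((if a then -1 else 1) * e a b))" for a
    using w0 w1 by (cases a) (simp_all add: e_def)
  have "basis2 e" unfolding basis2_def
  proof (intro allI impI)
    fix \<alpha> \<beta> assume comb: "\<forall>x. \<alpha> * e False x + \<beta> * e True x = 0"
    have "mulv2 v (\<lambda>x. \<alpha> * e False x + \<beta> * e True x) = (\<lambda>_. 0)"
      using comb by (simp add: mulv2_def dot2_def)
    then have "\<alpha> * mulv2 v (e False) x + \<beta> * mulv2 v (e True) x = 0" for x
      unfolding mulv2_lincomb by (simp add: fun_eq_iff)
    then have "\<alpha> * e False x - \<beta> * e True x = 0" for x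
      using \<mu>0 eig[of False] eig[of True] by (simp add: algebra_simps)
    then have "\<alpha> * e False x = 0 \<and> \<beta> * e True x = 0" for x
      using comb[rule_format, of x] by (simp add: algebra_simps)
    then show "\<alpha> = 0 \<and> \<beta> = 0"
      using w0(1) w1(1) by (auto simp: e_def)
  qed
  then have det: "det2 e \<noteq> 0"
    by (simp add: basis2_iff_det2)
  have "v r c = \<mu> * sign_op e r c" for r c
    using expand_mat_in_basis2[OF det, of v r c] eig[of False] eig[of True]
    by (simp add: sign_op_def algebra_simps)
  then show ?thesis
    using det \<mu>0 by blast
qed

definition adapted_basis :: "mat2 \<Rightarrow> mat2 \<Rightarrow> bool" where
  "adapted_basis v e \<longleftrightarrow> det2 e \<noteq> 0 \<and>
     (\<forall>y\<in>Vl v. flips_basis2 y e False) \<and> (\<forall>y\<in>Vt v. flips_basis2 y e True)"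

lemma ex_adapted_basis:
  assumes "v \<in> sl2" and "form2 v v \<noteq> 0"
  shows "\<exists>e. adapted_basis v e"
proof -
  obtain e \<mu> where det: "det2 e \<noteq> 0" and \<mu>: "\<mu> \<noteq> 0" and v: "v = (\<lambda>r c. \<mu> * sign_op e r c)"
    using sl2_eigenbasis[OF assms] by blast
  have "flips_basis2 y e False" if "y \<in> Vl v" for y
  proof -
    obtain c where "y = (\<lambda>a b. (c * \<mu>) * sign_op e a b)"
      using \<open>y \<in> Vl v\<close> unfolding Vl_def v by (auto simp: mult.assoc)
    then have "mulv2 y (e a) = (\<lambda>b. (c * \<mu>) * mulv2 (sign_op e) (e a) b)" for a
      by (simp add: mulv2_def dot2_def fun_eq_iff algebra_simps)
    then have "mulv2 y (e a) = (\<lambda>b. (c * \<mu> * (if a then -1 else 1)) * e a b)" for a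
      by (simp add: mulv2_sign_op[OF det] mult.assoc)
    then show ?thesis
      unfolding flips_basis2_def by metis
  qed
  moreover have "form2 x v = \<mu> * form2 x (sign_op e)" for x
    by (simp add: v form2_def UNIV_bool algebra_simps)
  then have "Vt v = Vt (sign_op e)"
    using \<mu> by (simp add: Vt_def)
  ultimately show ?thesis
    unfolding adapted_basis_def using det flips_basis2_Vt_sign_op[OF det] by blast
qed

section \<open>Tensor products\<close>

definition tensor_mat :: "nat \<Rightarrow> (nat \<Rightarrow> mat2) \<Rightarrow> cmat" where
  "tensor_mat n A = (\<lambda>r c. if r < 2^n \<and> c < 2^n then (\<Prod>i<n. A i (bit r i) (bit c i)) else 0)"

definition tensor_vec :: "nat \<Rightarrow> (nat \<Rightarrow> bool \<Rightarrow> complex) \<Rightarrow> cvec" where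
  "tensor_vec n w = (\<lambda>k. if k < 2^n then (\<Prod>i<n. w i (bit k i)) else 0)"

lemma ex_nat_bits: "\<exists>j::nat. j < 2^n \<and> (\<forall>i<n. bit j i = \<psi> i)"
proof (intro exI conjI allI impI)
  let ?j = "horner_sum of_bool 2 (map \<psi> [0..<n]) :: nat"
  show "?j < 2^n"
    using horner_sum_of_bool_2_less[of "map \<psi> [0..<n]"] by simp
  show "bit ?j i = \<psi> i" if "i < n" for i
    using that by (simp add: bit_horner_sum_bit_iff)
qed

lemma nat_bits_eqI: "j < 2^n \<Longrightarrow> j' < 2^n \<Longrightarrow> \<forall>i<n. bit j i = bit j' i \<Longrightarrow> j = j'"
  for j j' :: nat
  by (metis bit_eqI bit_take_bit_iff take_bit_nat_eq_self_iff)

lemma sum_prod_bits: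
  fixes g :: "nat \<Rightarrow> bool \<Rightarrow> 'a::comm_semiring_1"
  shows "(\<Sum>k::nat<2^n. \<Prod>i<n. g i (bit k i)) = (\<Prod>i<n. g i False + g i True)"
proof (induction n arbitrary: g)
  case 0
  then show ?case by simp
next
  case (Suc n)
  have split_parity: "(\<Sum>k<2 * m. F k) = (\<Sum>k<m. F (2 * k) + F (2 * k + 1))" for m and F :: "nat \<Rightarrow> 'a"
    by (induction m) (simp_all add: add.assoc add.left_commute)
  have "(\<Sum>k::nat<2^Suc n. \<Prod>i<Suc n. g i (bit k i))
      = (\<Sum>k::nat<2 * 2^n. g 0 (odd k) * (\<Prod>i<n. g (Suc i) (bit (k div 2) i)))"
    by (simp only: prod.lessThan_Suc_shift bit_Suc bit_0 power_Suc)
  also have "\<dots> = (g 0 False + g 0 True) * (\<Sum>k::nat<2^n. \<Prod>i<n. g (Suc i) (bit k i))"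
    by (simp add: split_parity sum_distrib_left algebra_simps)
  finally show ?case
    by (simp only: Suc[of "\<lambda>i. g (Suc i)"] prod.lessThan_Suc_shift)
qed

lemma prod_id2_bits:
  fixes r s :: nat
  assumes "r < 2^n" and "s < 2^n"
  shows "(\<Prod>i<n. id2 (bit r i) (bit s i)) = (if r = s then 1 else 0)"
proof (cases "r = s")
  case False
  then obtain i where "i < n" "bit r i \<noteq> bit s i"
    using nat_bits_eqI[OF assms] by blast
  then show ?thesis
    using False by (auto simp: id2_def intro!: prod_zero)
qed (simp add: id2_def)

lemma tensor_mat_cong: "(\<And>i. i < n \<Longrightarrow> A i = B i) \<Longrightarrow> tensor_mat n A = tensor_mat n B"
  unfolding tensor_mat_def by (intro ext) (auto intro!: prod.cong)

lemma tensor_vec_cong: "(\<And>i. i < n \<Longrightarrow> w i = u i) \<Longrightarrow> tensor_vec n w = tensor_vec n u"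
  unfolding tensor_vec_def by (intro ext) (auto intro!: prod.cong)

lemma embed_eq_tensor_mat: "embed n I x = tensor_mat n (\<lambda>i. if i \<in> I then x i else id2)"
  unfolding embed_def tensor_mat_def id2_def by (intro ext) (auto intro!: prod.cong)

lemma btensor_eq_tensor_vec: "btensor n e j = tensor_vec n (\<lambda>i. e i (bit j i))"
  unfolding btensor_def tensor_vec_def ..

lemma idm_eq_tensor_mat: "idm (2^n) = tensor_mat n (\<lambda>_. id2)"
  unfolding idm_def tensor_mat_def by (intro ext) (auto simp: prod_id2_bits)

lemma mulv_tensor:
  "mulv (2^n) (tensor_mat n A) (tensor_vec n w) = tensor_vec n (\<lambda>i. mulv2 (A i) (w i))"
proof
  fix r
  show "mulv (2^n) (tensor_mat n A) (tensor_vec n w) r = tensor_vec n (\<lambda>i. mulv2 (A i) (w i)) r"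
  proof (cases "r < 2^n")
    case True
    have "mulv (2^n) (tensor_mat n A) (tensor_vec n w) r
        = (\<Sum>k::nat<2^n. \<Prod>i<n. A i (bit r i) (bit k i) * w i (bit k i))"
      using True by (simp add: mulv_def tensor_mat_def tensor_vec_def prod.distrib)
    also have "\<dots> = tensor_vec n (\<lambda>i. mulv2 (A i) (w i)) r"
      using True sum_prod_bits[of "\<lambda>i b. A i (bit r i) b * w i b" n]
      by (simp add: tensor_vec_def mulv2_def dot2_def)
    finally show ?thesis .
  qed (simp add: mulv_def tensor_vec_def)
qed

lemma ctrace_tensor_mat: "ctrace (2^n) (tensor_mat n A) = (\<Prod>i<n. tr2 (A i))"
  using sum_prod_bits[of "\<lambda>i b. A i b b" n] by (simp add: ctrace_def tensor_mat_def tr2_def)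

lemma tensor_vec_scale: "tensor_vec n (\<lambda>i b. \<kappa> i * w i b) = (\<lambda>k. (\<Prod>i<n. \<kappa> i) * tensor_vec n w k)"
  unfolding tensor_vec_def by (auto simp: prod.distrib)

lemma tensor_mat_expand:
  fixes c :: "nat \<Rightarrow> 't \<Rightarrow> complex" and B :: "nat \<Rightarrow> 't \<Rightarrow> mat2"
  assumes "\<And>i. i < n \<Longrightarrow> finite (T i)"
    and "\<And>i. i < n \<Longrightarrow> A i = (\<lambda>a b. \<Sum>t\<in>T i. c i t * B i t a b)"
  shows "tensor_mat n A
    = (\<lambda>r k. \<Sum>g\<in>PiE {..<n} T. (\<Prod>i<n. c i (g i)) * tensor_mat n (\<lambda>i. B i (g i)) r k)"
proof (intro ext)
  fix r k :: nat
  have "(\<Prod>i<n. A i (bit r i) (bit k i)) = (\<Prod>i<n. \<Sum>t\<in>T i. c i t * B i t (bit r i) (bit k i))"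
    using assms(2) by (intro prod.cong) auto
  also have "\<dots> = (\<Sum>g\<in>PiE {..<n} T. \<Prod>i<n. c i (g i) * B i (g i) (bit r i) (bit k i))"
    using assms(1) by (intro prod_sum_PiE) auto
  finally show "tensor_mat n A r k
      = (\<Sum>g\<in>PiE {..<n} T. (\<Prod>i<n. c i (g i)) * tensor_mat n (\<lambda>i. B i (g i)) r k)"
    by (auto simp: tensor_mat_def prod.distrib)
qed

lemma card_symdiff_even:
  assumes "finite A" and "finite B"
  shows "even (card (sym_diff A B)) \<longleftrightarrow> (even (card A) \<longleftrightarrow> even (card B))"
proof -
  have "card (sym_diff A B) = card (A - B) + card (B - A)"
    using assms by (intro card_Un_disjoint) auto
  moreover have "card A = card (A \<inter> B) + card (A - B)" "card B = card (A \<inter> B) + card (B - A)"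
    using assms card_Int_Diff[of B A] by (simp_all add: card_Int_Diff Int_commute)
  ultimately show ?thesis
    by presburger
qed

lemma par_eq_iff: "par n j' = par n j \<longleftrightarrow> even (card {i. i < n \<and> bit j i \<noteq> bit j' i})"
  for j j' :: nat
proof -
  let ?A = "{i. i < n \<and> bit j i}" and ?F = "{i. i < n \<and> bit j i \<noteq> bit j' i}"
  have "{i. i < n \<and> bit j' i} = (?A - ?F) \<union> (?F - ?A)"
    by auto
  then show ?thesis
    unfolding par_def using card_symdiff_even[of ?A ?F] by auto
qed

section \<open>Spans\<close>

interpretation vec: module "\<lambda>(c::complex) (w::cvec) r. c * w r"
  by unfold_locales (simp_all add: fun_eq_iff distrib_left distrib_right)

interpretation mat: module "\<lambda>(c::complex) (M::cmat) r k. c * M r k"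
  by unfold_locales (simp_all add: fun_eq_iff distrib_left distrib_right)

lemma sum_fun_apply: "(\<Sum>a\<in>A. f a) x = (\<Sum>a\<in>A. f a x)"
  by (induction A rule: infinite_finite_induct) simp_all

lemma cspan_v_eq_span: "cspan_v S = vec.span S"
  unfolding cspan_v_def vec.span_explicit by (auto simp: fun_eq_iff sum_fun_apply)

lemma cspan_m_eq_span: "cspan_m S = mat.span S"
  unfolding cspan_m_def mat.span_explicit by (auto simp: fun_eq_iff sum_fun_apply)

lemma mulv_mat_span:
  assumes "M \<in> mat.span S" and "\<And>g. g \<in> S \<Longrightarrow> mulv N g h \<in> vec.span T"
  shows "mulv N M h \<in> vec.span T"
  using assms(1)
proof (induction rule: mat.span_induct_alt)
  case base
  have "mulv N (\<lambda>_ _. 0) h = (\<lambda>_. 0)"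
    by (simp add: fun_eq_iff mulv_def)
  then show ?case
    using vec.span_zero by (simp add: zero_fun_def)
next
  case (step c g M)
  have "mulv N (\<lambda>r k. c * g r k + M r k) h = (\<lambda>r. c * mulv N g h r + mulv N M h r)"
    by (simp add: fun_eq_iff mulv_def sum.distrib sum_distrib_left distrib_right mult.assoc)
  then show ?case
    using vec.span_add[OF vec.span_scale[OF assms(2)[OF step.hyps]] step.IH]
    by (simp add: plus_fun_def)
qed

lemma mulv_vec_span:
  assumes "w \<in> vec.span S" and "\<And>u. u \<in> S \<Longrightarrow> mulv N M u \<in> vec.span T"
  shows "mulv N M w \<in> vec.span T"
  using assms(1)
proof (induction rule: vec.span_induct_alt)
  case base
  have "mulv N M (\<lambda>_. 0) = (\<lambda>_. 0)"
    by (simp add: fun_eq_iff mulv_def)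
  then show ?case
    using vec.span_zero by (simp add: zero_fun_def)
next
  case (step c u w)
  have "mulv N M (\<lambda>k. c * u k + w k) = (\<lambda>r. c * mulv N M u r + mulv N M w r)"
    by (simp add: fun_eq_iff mulv_def sum.distrib sum_distrib_left distrib_left mult.left_commute)
  then show ?case
    using vec.span_add[OF vec.span_scale[OF assms(2)[OF step.hyps]] step.IH]
    by (simp add: plus_fun_def)
qed

lemma outer_vec_span:
  assumes "w \<in> vec.span S" and "\<And>u. u \<in> S \<Longrightarrow> (\<lambda>r c. u r * d c) \<in> mat.span T"
  shows "(\<lambda>r c. w r * d c) \<in> mat.span T"
  using assms(1)
proof (induction rule: vec.span_induct_alt)
  case base
  have "(\<lambda>r c. 0 * d c) \<in> mat.span T"
    using mat.span_zero by (simp add: zero_fun_def)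
  then show ?case
    by (simp add: zero_fun_def)
next
  case (step a u w)
  show ?case
    using mat.span_add[OF mat.span_scale[OF assms(2)[OF step.hyps]] step.IH]
    by (simp add: plus_fun_def distrib_right)
qed

lemma mat_span_sum:
  assumes "\<And>g. g \<in> G \<Longrightarrow> M g \<in> mat.span S"
  shows "(\<lambda>r k. \<Sum>g\<in>G. M g r k) \<in> mat.span S"
proof -
  have "(\<Sum>g\<in>G. M g) \<in> mat.span S"
    using assms by (rule mat.span_sum)
  moreover have "(\<Sum>g\<in>G. M g) = (\<lambda>r k. \<Sum>g\<in>G. M g r k)"
    by (simp add: fun_eq_iff sum_fun_apply)
  ultimately show ?thesis
    by simp
qed

lemma ctrace_mat_span:
  assumes "M \<in> mat.span S" and "\<And>g. g \<in> S \<Longrightarrow> ctrace N g = 0"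
  shows "ctrace N M = 0"
  using assms(1)
proof (induction rule: mat.span_induct_alt)
  case (step c g M)
  then show ?case
    using assms(2)[OF step.hyps] by (simp add: ctrace_def sum.distrib sum_distrib_left[symmetric])
qed (simp add: ctrace_def)

lemma in_range_mat_span:
  assumes "M \<in> mat.span S" and "\<And>g. g \<in> S \<Longrightarrow> in_range N g"
  shows "in_range N M"
  using assms(1)
proof (induction rule: mat.span_induct_alt)
  case (step c g M)
  then show ?case
    using assms(2)[OF step.hyps] by (simp add: in_range_def)
qed (simp add: in_range_def)

section \<open>The image of \<open>\<pi>\<close> consists of X-states\<close>

definition parity_span :: "nat \<Rightarrow> (nat \<Rightarrow> mat2) \<Rightarrow> bool \<Rightarrow> cvec set" where
  "parity_span n e p = vec.span {btensor n e j | j. j < 2^n \<and> par n j = p}"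

lemma btensor_in_parity_span: "j < 2^n \<Longrightarrow> btensor n e j \<in> parity_span n e (par n j)"
  unfolding parity_span_def by (rule vec.span_base) blast

lemma parity_span_scale: "u \<in> parity_span n e p \<Longrightarrow> (\<lambda>r. c * u r) \<in> parity_span n e p"
  unfolding parity_span_def by (rule vec.span_scale)

lemma parity_span_add:
  "u \<in> parity_span n e p \<Longrightarrow> w \<in> parity_span n e p \<Longrightarrow> (\<lambda>r. u r + w r) \<in> parity_span n e p"
  unfolding parity_span_def by (drule (1) vec.span_add) (simp add: plus_fun_def)

lemma Xstate_iff:
  "Xstate n \<rho> \<longleftrightarrow> \<rho> \<in> Lspace n \<and> (\<exists>e. (\<forall>i<n. det2 (e i) \<noteq> 0) \<and>
     (\<forall>j<2^n. mulv (2^n) \<rho> (btensor n e j) \<in> parity_span n e (par n j)))"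
proof -
  have invariant_iff: "(\<forall>p. \<forall>w\<in>parity_span n e p. mulv (2^n) \<rho> w \<in> parity_span n e p)
    \<longleftrightarrow> (\<forall>j<2^n. mulv (2^n) \<rho> (btensor n e j) \<in> parity_span n e (par n j))" for e
  proof
    assume images: "\<forall>j<2^n. mulv (2^n) \<rho> (btensor n e j) \<in> parity_span n e (par n j)"
    show "\<forall>p. \<forall>w\<in>parity_span n e p. mulv (2^n) \<rho> w \<in> parity_span n e p"
    proof (intro allI ballI)
      fix p w
      assume "w \<in> parity_span n e p"
      then show "mulv (2^n) \<rho> w \<in> parity_span n e p"
        unfolding parity_span_def
      proof (rule mulv_vec_span)
        fix u assume "u \<in> {btensor n e j |j. j < 2^n \<and> par n j = p}"
        then obtain j where "u = btensor n e j" "j < 2^n" "par n j = p"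
          by blast
        then show "mulv (2^n) \<rho> u \<in> vec.span {btensor n e j |j. j < 2^n \<and> par n j = p}"
          using images unfolding parity_span_def by blast
      qed
    qed
  qed (simp add: btensor_in_parity_span)
  show ?thesis
    unfolding Xstate_def basis2_iff_det2 cspan_v_eq_span parity_span_def[symmetric] invariant_iff ..
qed

definition bloch_gens :: "nat \<Rightarrow> (nat \<Rightarrow> mat2) \<Rightarrow> cmat set" where
  "bloch_gens n v = {embed n I x | I x. I \<subseteq> {..<n} \<and> I \<noteq> {} \<and>
      (\<exists>\<tau>. even (card {i\<in>I. \<tau> i}) \<and> (\<forall>i\<in>I. x i \<in> (if \<tau> i then Vt (v i) else Vl (v i))))}"

lemma XB_eq_span: "XB n v = mat.span (bloch_gens n v)"
  unfolding XB_def bloch_gens_def cspan_m_eq_span ..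

lemma tensor_mat_preserves_parity:
  assumes flips: "\<forall>i<n. flips_basis2 (y i) (e i) (fl i)"
    and even: "even (card {i. i < n \<and> fl i})" and j: "j < 2^n"
  shows "mulv (2^n) (tensor_mat n y) (btensor n e j) \<in> parity_span n e (par n j)"
proof -
  have "\<exists>k. mulv2 (y i) (e i (bit j i)) = (\<lambda>b. k * e i (bit j i \<noteq> fl i) b)" if "i < n" for i
    using flips that unfolding flips_basis2_def by simp
  then obtain \<kappa> where
    \<kappa>: "\<And>i. i < n \<Longrightarrow> mulv2 (y i) (e i (bit j i)) = (\<lambda>b. \<kappa> i * e i (bit j i \<noteq> fl i) b)"
    by metis
  obtain j' :: nat where j': "j' < 2^n" "\<forall>i<n. bit j' i = (bit j i \<noteq> fl i)"
    using ex_nat_bits[of n "\<lambda>i. bit j i \<noteq> fl i"] by blast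
  have "mulv (2^n) (tensor_mat n y) (btensor n e j)
      = tensor_vec n (\<lambda>i. mulv2 (y i) (e i (bit j i)))"
    by (simp add: btensor_eq_tensor_vec mulv_tensor)
  also have "\<dots> = tensor_vec n (\<lambda>i b. \<kappa> i * e i (bit j' i) b)"
    by (rule tensor_vec_cong) (simp add: \<kappa> j')
  also have "\<dots> = (\<lambda>k. (\<Prod>i<n. \<kappa> i) * btensor n e j' k)"
    by (simp add: tensor_vec_scale btensor_eq_tensor_vec)
  finally have image:
    "mulv (2^n) (tensor_mat n y) (btensor n e j) = (\<lambda>k. (\<Prod>i<n. \<kappa> i) * btensor n e j' k)" .
  have "{i. i < n \<and> bit j i \<noteq> bit j' i} = {i. i < n \<and> fl i}"
    using j' by auto
  then have "par n j' = par n j"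
    using even par_eq_iff[of n j' j] by simp
  then have "btensor n e j' \<in> parity_span n e (par n j)"
    using btensor_in_parity_span[OF j'(1)] by simp
  then show ?thesis
    unfolding image by (rule parity_span_scale)
qed

lemma bloch_gen_preserves_parity:
  assumes adapted: "\<forall>i<n. adapted_basis (v i) (e i)"
    and g: "g \<in> bloch_gens n v" and j: "j < 2^n"
  shows "mulv (2^n) g (btensor n e j) \<in> parity_span n e (par n j)"
proof -
  obtain I x \<tau> where g: "g = embed n I x" and I: "I \<subseteq> {..<n}" and even: "even (card {i\<in>I. \<tau> i})"
    and x: "\<forall>i\<in>I. x i \<in> (if \<tau> i then Vt (v i) else Vl (v i))"
    using g unfolding bloch_gens_def by blast
  define fl where "fl i \<longleftrightarrow> i \<in> I \<and> \<tau> i" for i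
  have "{i. i < n \<and> fl i} = {i\<in>I. \<tau> i}"
    using I by (auto simp: fl_def)
  moreover have "flips_basis2 (if i \<in> I then x i else id2) (e i) (fl i)" if i: "i < n" for i
  proof (cases "i \<in> I")
    case True
    then have "x i \<in> (if \<tau> i then Vt (v i) else Vl (v i))"
      using x by blast
    then show ?thesis
      using adapted i True by (cases "\<tau> i") (simp_all add: fl_def adapted_basis_def)
  qed (simp add: fl_def flips_basis2_id2)
  ultimately show ?thesis
    unfolding g embed_eq_tensor_mat using even
    by (intro tensor_mat_preserves_parity[where fl = fl] j) auto
qed

lemma ctrace_bloch_gen:
  assumes v: "frame n v" and g: "g \<in> bloch_gens n v"
  shows "ctrace (2^n) g = 0"
proof -
  obtain I x \<tau> where g: "g = embed n I x" and I: "I \<subseteq> {..<n}" "I \<noteq> {}"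
    and x: "\<forall>i\<in>I. x i \<in> (if \<tau> i then Vt (v i) else Vl (v i))"
    using g unfolding bloch_gens_def by blast
  obtain i where i: "i \<in> I"
    using I(2) by blast
  have "v i \<in> sl2"
    using v i I(1) unfolding frame_def by blast
  moreover have "x i \<in> (if \<tau> i then Vt (v i) else Vl (v i))"
    using x i by blast
  ultimately have "x i \<in> sl2"
    using Vl_subset_sl2 Vt_subset_sl2 by (auto split: if_splits)
  then show ?thesis
    unfolding g embed_eq_tensor_mat ctrace_tensor_mat using i I(1)
    by (intro prod_zero bexI[of _ i]) (auto simp: sl2_def)
qed

lemma XB_ctrace: "frame n v \<Longrightarrow> x \<in> XB n v \<Longrightarrow> ctrace (2^n) x = 0"
  unfolding XB_eq_span by (blast intro: ctrace_mat_span ctrace_bloch_gen)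

lemma XB_in_range: "x \<in> XB n v \<Longrightarrow> in_range (2^n) x"
  unfolding XB_eq_span
  by (erule in_range_mat_span) (auto simp: bloch_gens_def embed_def in_range_def)

lemma bloch_in_Lspace:
  assumes "frame n v" and "x \<in> XB n v"
  shows "bloch n x \<in> Lspace n"
proof -
  have "ctrace (2^n) (bloch n x) = ctrace (2^n) (idm (2^n)) / 2^n + ctrace (2^n) x"
    by (simp add: ctrace_def bloch_def sum.distrib sum_divide_distrib)
  then have "ctrace (2^n) (bloch n x) = 1"
    using XB_ctrace[OF assms] by (simp add: ctrace_def idm_def)
  moreover have "in_range (2^n) (bloch n x)"
    using XB_in_range[OF assms(2)] by (simp add: in_range_def bloch_def idm_def)
  ultimately show ?thesis
    unfolding Lspace_def by simp
qed

lemma mulv_bloch: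
  assumes "in_range (2^n) x" and "\<And>k. 2^n \<le> k \<Longrightarrow> w k = 0"
  shows "mulv (2^n) (bloch n x) w = (\<lambda>r. (1 / 2^n) * w r + mulv (2^n) x w r)"
proof
  fix r
  show "mulv (2^n) (bloch n x) w r = (1 / 2^n) * w r + mulv (2^n) x w r"
  proof (cases "r < 2^n")
    case True
    have "(\<Sum>k<2^n. idm (2^n) r k * w k) = (\<Sum>k<2^n. if k = r then w k else 0)"
      using True by (intro sum.cong) (auto simp: idm_def)
    then have "(\<Sum>k<2^n. idm (2^n) r k * w k) = w r"
      using True by simp
    then show ?thesis
      using True
      by (simp add: mulv_def bloch_def sum.distrib distrib_right sum_divide_distrib[symmetric])
  qed (simp add: assms(2) mulv_def)
qed

lemma pi_image_Xstate:
  assumes "\<rho> \<in> pi_image n"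
  shows "Xstate n \<rho>"
proof -
  obtain v x where \<rho>: "\<rho> = bloch n x" and v: "frame n v" and x: "x \<in> XB n v"
    using assms unfolding pi_image_def by blast
  have "\<forall>i. \<exists>E. i < n \<longrightarrow> adapted_basis (v i) E"
    using ex_adapted_basis v unfolding frame_def by blast
  then obtain e where e: "\<forall>i<n. adapted_basis (v i) (e i)"
    by metis
  have "mulv (2^n) \<rho> (btensor n e j) \<in> parity_span n e (par n j)" if j: "j < 2^n" for j
  proof -
    have image: "mulv (2^n) \<rho> (btensor n e j)
        = (\<lambda>r. (1 / 2^n) * btensor n e j r + mulv (2^n) x (btensor n e j) r)"
      unfolding \<rho> using XB_in_range[OF x] by (rule mulv_bloch) (simp add: btensor_def)
    have "mulv (2^n) x (btensor n e j) \<in> parity_span n e (par n j)"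
      using x e j unfolding XB_eq_span parity_span_def
      by (blast intro: mulv_mat_span bloch_gen_preserves_parity[unfolded parity_span_def])
    then show ?thesis
      unfolding image by (intro parity_span_add parity_span_scale btensor_in_parity_span j)
  qed
  then show ?thesis
    unfolding Xstate_iff using bloch_in_Lspace[OF v x] \<rho> e adapted_basis_def by blast
qed

section \<open>Every X-state lies in the image of \<open>\<pi>\<close>\<close>

definition dual_btensor :: "nat \<Rightarrow> (nat \<Rightarrow> mat2) \<Rightarrow> nat \<Rightarrow> cvec" where
  "dual_btensor n e j = tensor_vec n (\<lambda>i. dual2 (e i) (bit j i))"

lemma btensor_dual_complete:
  assumes det: "\<forall>i<n. det2 (e i) \<noteq> 0" and r: "r < 2^n" and s: "s < 2^n"
  shows "(\<Sum>j::nat<2^n. btensor n e j r * dual_btensor n e j s) = (if r = s then 1 else 0)"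
proof -
  have "(\<Sum>j::nat<2^n. btensor n e j r * dual_btensor n e j s)
      = (\<Sum>j::nat<2^n. \<Prod>i<n. e i (bit j i) (bit r i) * dual2 (e i) (bit j i) (bit s i))"
    using r s by (simp add: btensor_def dual_btensor_def tensor_vec_def prod.distrib)
  also have "\<dots> = (\<Prod>i<n. id2 (bit r i) (bit s i))"
    using sum_prod_bits[of "\<lambda>i b. e i b (bit r i) * dual2 (e i) b (bit s i)" n] det
    by (simp add: dual2_complete)
  also have "\<dots> = (if r = s then 1 else 0)"
    by (rule prod_id2_bits[OF r s])
  finally show ?thesis .
qed

lemma expand_by_btensor_images:
  assumes det: "\<forall>i<n. det2 (e i) \<noteq> 0" and \<rho>: "in_range (2^n) \<rho>"
  shows "\<rho> = (\<lambda>r c. \<Sum>j::nat<2^n. mulv (2^n) \<rho> (btensor n e j) r * dual_btensor n e j c)"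
proof (intro ext)
  fix r c :: nat
  show "\<rho> r c = (\<Sum>j::nat<2^n. mulv (2^n) \<rho> (btensor n e j) r * dual_btensor n e j c)"
  proof (cases "r < 2^n \<and> c < 2^n")
    case True
    have "(\<Sum>j::nat<2^n. mulv (2^n) \<rho> (btensor n e j) r * dual_btensor n e j c)
        = (\<Sum>j::nat<2^n. \<Sum>k::nat<2^n. \<rho> r k * (btensor n e j k * dual_btensor n e j c))"
      using True by (simp add: mulv_def sum_distrib_right mult.assoc)
    also have "\<dots> = (\<Sum>k::nat<2^n. \<rho> r k * (\<Sum>j::nat<2^n. btensor n e j k * dual_btensor n e j c))"
      by (subst sum.swap) (simp add: sum_distrib_left)
    also have "\<dots> = \<rho> r c"
      using True by (simp add: btensor_dual_complete[OF det] if_distrib cong: if_cong)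
    finally show ?thesis ..
  next
    case False
    then show ?thesis
      using \<rho> by (auto simp: in_range_def mulv_def dual_btensor_def tensor_vec_def)
  qed
qed

lemma tensor_mat_in_bloch_gens:
  assumes even: "even (card {i. i < n \<and> fl i})"
    and y: "\<forall>i<n. if fl i then y i \<in> Vt (v i) else y i \<in> {id2, v i}"
  shows "tensor_mat n y \<in> insert (idm (2^n)) (bloch_gens n v)"
proof -
  define I where "I = {i. i < n \<and> (fl i \<or> y i \<noteq> id2)}"
  have y_eq: "tensor_mat n y = embed n I y"
    unfolding embed_eq_tensor_mat by (rule tensor_mat_cong) (simp add: I_def)
  show ?thesis
  proof (cases "I = {}")
    case True
    then show ?thesis
      unfolding y_eq by (simp add: embed_eq_tensor_mat idm_eq_tensor_mat)
  next
    case False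
    have "{i\<in>I. fl i} = {i. i < n \<and> fl i}"
      by (auto simp: I_def)
    then have "even (card {i\<in>I. fl i})"
      using even by simp
    moreover have "y i \<in> (if fl i then Vt (v i) else Vl (v i))" if "i \<in> I" for i
    proof -
      have "v i \<in> Vl (v i)"
        unfolding Vl_def by (rule CollectI, rule exI[of _ 1]) simp
      then show ?thesis
        using y that unfolding I_def by force
    qed
    moreover have "I \<subseteq> {..<n}"
      by (auto simp: I_def)
    ultimately have "embed n I y \<in> bloch_gens n v"
      unfolding bloch_gens_def using False by blast
    then show ?thesis
      unfolding y_eq by simp
  qed
qed

lemma outer_btensor_eq_tensor_mat:
  "(\<lambda>r c. btensor n e j r * dual_btensor n e j' c)
    = tensor_mat n (\<lambda>i. matunit2 (e i) (bit j i) (bit j' i))"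
  by (simp add: fun_eq_iff tensor_mat_def btensor_def dual_btensor_def tensor_vec_def matunit2_def
      prod.distrib)

lemma outer_btensor_in_span:
  assumes det: "\<forall>i<n. det2 (e i) \<noteq> 0" and p: "par n j = par n j'"
  shows "(\<lambda>r c. btensor n e j r * dual_btensor n e j' c)
    \<in> mat.span (insert (idm (2^n)) (bloch_gens n (\<lambda>i. sign_op (e i))))"
proof -
  define fl where "fl i \<longleftrightarrow> bit j i \<noteq> bit j' i" for i
  have even: "even (card {i. i < n \<and> fl i})"
    using p par_eq_iff[of n j' j] unfolding fl_def by simp
  \<comment> \<open>Factorwise, \<open>E\<^sub>a\<^sub>a = (1 \<plusminus> sign_op)/2\<close>, while \<open>E\<^sub>a\<^sub>b\<close> for \<open>a \<noteq> b\<close>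
    is itself transversal.\<close>
  define c :: "nat \<Rightarrow> bool \<Rightarrow> complex" where
    "c i t = (if fl i then (if t then 0 else 1)
              else (if t then (if bit j i then -1 else 1) / 2 else 1 / 2))"
    for i t
  define B :: "nat \<Rightarrow> bool \<Rightarrow> mat2" where
    "B i t = (if fl i then matunit2 (e i) (bit j i) (bit j' i)
              else if t then sign_op (e i) else id2)"
    for i t
  have factors: "matunit2 (e i) (bit j i) (bit j' i) = (\<lambda>a b. \<Sum>t\<in>UNIV. c i t * B i t a b)"
    if "i < n" for i
  proof (cases "fl i")
    case False
    then have "bit j' i = bit j i"
      by (simp add: fl_def)
    then show ?thesis
      using False matunit2_diag[of "e i" "bit j i"] det that
      by (simp add: UNIV_bool c_def B_def fun_eq_iff add_divide_distrib)
  qed (simp add: UNIV_bool c_def B_def)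
  have "tensor_mat n (\<lambda>i. B i (g i)) \<in> insert (idm (2^n)) (bloch_gens n (\<lambda>i. sign_op (e i)))" for g
    using even by (intro tensor_mat_in_bloch_gens) (auto simp: B_def fl_def matunit2_offdiag_Vt)
  then have "(\<lambda>r k. \<Sum>g\<in>PiE {..<n} (\<lambda>_. UNIV). (\<Prod>i<n. c i (g i)) * tensor_mat n (\<lambda>i. B i (g i)) r k)
      \<in> mat.span (insert (idm (2^n)) (bloch_gens n (\<lambda>i. sign_op (e i))))"
    by (intro mat_span_sum[where M = "\<lambda>g r k. (\<Prod>i<n. c i (g i)) * tensor_mat n (\<lambda>i. B i (g i)) r k"]
        mat.span_scale mat.span_base)
  then show ?thesis
    unfolding outer_btensor_eq_tensor_mat by (subst tensor_mat_expand[OF _ factors]) simp_all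
qed

lemma pi_image_of_span_insert_idm:
  assumes v: "frame n v" and span: "\<rho> \<in> mat.span (insert (idm (2^n)) (bloch_gens n v))"
    and L: "\<rho> \<in> Lspace n"
  shows "\<rho> \<in> pi_image n"
proof -
  obtain k where "\<rho> - (\<lambda>r c. k * idm (2^n) r c) \<in> mat.span (bloch_gens n v)"
    using span unfolding mat.span_insert by blast
  moreover define x where "x = (\<lambda>r c. \<rho> r c - k * idm (2^n) r c)"
  ultimately have x: "x \<in> XB n v"
    unfolding XB_eq_span by (simp add: fun_diff_def)
  have "ctrace (2^n) x = ctrace (2^n) \<rho> - k * 2^n"
    by (simp add: x_def ctrace_def idm_def sum_subtractf)
  then have "k = 1 / 2^n"
    using XB_ctrace[OF v x] L by (simp add: Lspace_def field_simps)
  then have "\<rho> = bloch n x"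
    by (simp add: x_def bloch_def fun_eq_iff)
  then show ?thesis
    unfolding pi_image_def using v x by blast
qed

lemma Xstate_pi_image:
  assumes "Xstate n \<rho>"
  shows "\<rho> \<in> pi_image n"
proof -
  obtain e where L: "\<rho> \<in> Lspace n" and det: "\<forall>i<n. det2 (e i) \<noteq> 0"
    and images: "\<forall>j<2^n. mulv (2^n) \<rho> (btensor n e j) \<in> parity_span n e (par n j)"
    using assms unfolding Xstate_iff by blast
  define v where "v i = sign_op (e i)" for i
  have v: "frame n v"
    using det sign_op_sl2 form2_sign_op by (simp add: frame_def v_def)
  let ?S = "mat.span (insert (idm (2^n)) (bloch_gens n v))"
  have "(\<lambda>r c. mulv (2^n) \<rho> (btensor n e j) r * dual_btensor n e j c) \<in> ?S" if j: "j < 2^n" for j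
  proof (rule outer_vec_span)
    show "mulv (2^n) \<rho> (btensor n e j)
        \<in> vec.span {btensor n e j' |j'. j' < 2^n \<and> par n j' = par n j}"
      using images j unfolding parity_span_def by blast
  next
    fix u assume "u \<in> {btensor n e j' |j'. j' < 2^n \<and> par n j' = par n j}"
    then obtain j' where "u = btensor n e j'" "par n j' = par n j"
      by blast
    then show "(\<lambda>r c. u r * dual_btensor n e j c) \<in> ?S"
      unfolding v_def using outer_btensor_in_span[OF det] by simp
  qed
  then have "(\<lambda>r c. \<Sum>j<2^n. mulv (2^n) \<rho> (btensor n e j) r * dual_btensor n e j c) \<in> ?S"
    by (rule mat_span_sum) simp
  then have "\<rho> \<in> ?S"
    using L by (simp only: expand_by_btensor_images[OF det, symmetric] Lspace_def mem_Collect_eq)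
  then show ?thesis
    using pi_image_of_span_insert_idm[OF v _ L] by blast
qed

theorem lemma4p12:
  fixes n :: nat
  shows "vanishing_ideal (2^n) (pi_image n) = vanishing_ideal (2^n) {\<rho>. Xstate n \<rho>}"
proof -
  have "pi_image n = {\<rho>. Xstate n \<rho>}"
    using pi_image_Xstate Xstate_pi_image by auto
  then show ?thesis
    by simp
qed

end
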